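(* Let $\psi$ and $\phi$ be Borel probability measures on $\mathbb R_+=[0,\infty)$, each with full support on $\mathbb R_+$. For every Borel measurable $\sigma:\mathbb R_+\to\mathbb R_+$ with $\sigma(w)\le w$ for all $w$, the transition kernel on $\mathbb R_+$ defined by $$P_\sigma(w,B)=\int\!\!\int \mathbb 1_B\big(\eta'(w-\sigma(w))+y'\big)\,\psi(\mathrm d\eta')\,\phi(\mathrm dy')\qquad(w\in\mathbb R_+,\ B\subset\mathbb R_+\text{ Borel})$$ is open set irreducible.
   Context: $\mathbb R_+$ carries its usual metric (open sets are relatively open subsets of $[0,\infty)$). A measure has full support on $\mathbb R_+$ if it assigns positive mass to every nonempty open subset of $\mathbb R_+$. For a transition kernel $Q$ on a metric space $\mathsf X$, $Q^n$ denotes the $n$-step kernel; a point $y$ is $Q$-reachable from $x$ if for every open neighborhood $G$ of $y$ there is $n\in\mathbb N=\{1,2,\dots\}$ with $Q^n(x,G)>0$; $Q$ is open set irreducible if every $y\in\mathsf X$ is $Q$-reachable from every $x\in\mathsf X$. *)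

theory Defs
  imports "HOL-Probability.Probability"
begin

abbreviation Rplus :: "real set" where "Rplus \<equiv> {0..}"

abbreviation borel_Rplus :: "real measure" where
  "borel_Rplus \<equiv> restrict_space borel Rplus"

definition full_support :: "real measure \<Rightarrow> real set \<Rightarrow> bool" where
  "full_support \<mu> S \<longleftrightarrow>
     (\<forall>G. openin (top_of_set S) G \<and> G \<noteq> {} \<longrightarrow> emeasure \<mu> G > 0)"

text \<open>The kernel P_sigma(w, .): law of eta' * (w - sigma w) + y' with eta' ~ psi and
  y' ~ phi independent, i.e. P_sigma(w,B) = double integral of the indicator of B.\<close>
definition P_sigma :: "real measure \<Rightarrow> real measure \<Rightarrow> (real \<Rightarrow> real) \<Rightarrow> real \<Rightarrow> real measure" where
  "P_sigma \<psi> \<phi> \<sigma> w = distr (\<psi> \<Otimes>\<^sub>M \<phi>) borel_Rplus (\<lambda>(\<eta>, y). \<eta> * (w - \<sigma> w) + y)"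

fun kernel_pow :: "(real \<Rightarrow> real measure) \<Rightarrow> nat \<Rightarrow> real \<Rightarrow> real set \<Rightarrow> ennreal" where
  "kernel_pow Q 0 x B = indicator B x"
| "kernel_pow Q (Suc n) x B = (\<integral>\<^sup>+ y. kernel_pow Q n y B \<partial>(Q x))"

definition reachable :: "(real \<Rightarrow> real measure) \<Rightarrow> real set \<Rightarrow> real \<Rightarrow> real \<Rightarrow> bool" where
  "reachable Q S x y \<longleftrightarrow>
     (\<forall>G. openin (top_of_set S) G \<and> y \<in> G \<longrightarrow> (\<exists>n\<ge>1. kernel_pow Q n x G > 0))"

definition open_set_irreducible :: "(real \<Rightarrow> real measure) \<Rightarrow> real set \<Rightarrow> bool" where
  "open_set_irreducible Q S \<longleftrightarrow> (\<forall>x\<in>S. \<forall>y\<in>S. reachable Q S x y)"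

end

theory Submission
  imports Defs
begin

text \<open>One step suffices: from any \<open>w\<close>, the law of \<open>\<eta>' c + y'\<close> with \<open>c = w - \<sigma> w \<ge> 0\<close>
  already has full support on \<open>[0,\<infinity>)\<close>. Indeed, a neighbourhood of a target point \<open>y\<close>
  contains every \<open>a c + b\<close> with \<open>a\<close> small and \<open>b\<close> close to \<open>y\<close>, and the product measure
  of such a box is the product of two masses that are positive by the full support of
  \<open>\<psi>\<close> and \<open>\<phi>\<close>.\<close>

lemma openin_in_sets_restrict_borel:
  "openin (top_of_set S) G \<Longrightarrow> G \<in> sets (restrict_space borel S)"
  by (auto simp: openin_open sets_restrict_space)

lemma open_set_irreducible_if_full_support:
  assumes "\<And>x. x \<in> S \<Longrightarrow> sets (Q x) = sets (restrict_space borel S)"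
    and "\<And>x. x \<in> S \<Longrightarrow> full_support (Q x) S"
  shows "open_set_irreducible Q S"
  unfolding open_set_irreducible_def reachable_def
proof (intro ballI allI impI exI conjI)
  fix x y G
  assume "x \<in> S" "y \<in> S" and G: "openin (top_of_set S) G \<and> y \<in> G"
  then have "emeasure (Q x) G > 0"
    using assms(2) by (auto simp: full_support_def)
  then show "kernel_pow Q 1 x G > 0"
    using G assms(1)[OF \<open>x \<in> S\<close>] by (simp add: openin_in_sets_restrict_borel)
qed simp

lemma small_scaled_shift_in_open:
  fixes c y :: real
  assumes "c \<ge> 0" "open U" "y \<in> U"
  obtains d e where "d > 0" "e > 0" "\<And>a b. 0 \<le> a \<Longrightarrow> a < d \<Longrightarrow> dist y b < e \<Longrightarrow> a * c + b \<in> U"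
proof -
  obtain r where "r > 0" "ball y r \<subseteq> U"
    using assms open_contains_ball by blast
  define d where "d = r / (2 * (c + 1))"
  have "a * c + b \<in> U" if "0 \<le> a" "a < d" "dist y b < r / 2" for a b
  proof -
    have "a * c \<le> d * c" using that assms(1) by (simp add: mult_right_mono)
    also have "\<dots> < r / 2" using \<open>r > 0\<close> assms(1) by (simp add: d_def field_simps)
    finally have "dist y (a * c + b) < r"
      using that assms(1) zero_le_mult_iff[of a c] unfolding dist_real_def by linarith
    then show ?thesis using \<open>ball y r \<subseteq> U\<close> by auto
  qed
  moreover have "d > 0" using \<open>r > 0\<close> assms(1) by (simp add: d_def)
  ultimately show thesis using that \<open>r > 0\<close> by (meson half_gt_zero)
qed

lemma measurable_scaled_sum_Rplus:
  fixes c :: real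
  assumes "c \<ge> 0"
  shows "(\<lambda>(\<eta>, y). \<eta> * c + y) \<in> borel_Rplus \<Otimes>\<^sub>M borel_Rplus \<rightarrow>\<^sub>M borel_Rplus"
proof (rule measurable_restrict_space2)
  have ident: "(\<lambda>z. z) \<in> borel_measurable borel_Rplus"
    by (rule measurable_restrict_space1) simp
  have "(\<lambda>p. fst p * c + snd p) \<in> borel_measurable (borel_Rplus \<Otimes>\<^sub>M borel_Rplus)"
    using measurable_compose[OF measurable_fst ident] measurable_compose[OF measurable_snd ident]
    by (intro borel_measurable_add borel_measurable_times borel_measurable_const) auto
  then show "(\<lambda>(\<eta>, y). \<eta> * c + y) \<in> borel_measurable (borel_Rplus \<Otimes>\<^sub>M borel_Rplus)"
    by (simp add: case_prod_beta')
  show "(\<lambda>(\<eta>, y). \<eta> * c + y) \<in> space (borel_Rplus \<Otimes>\<^sub>M borel_Rplus) \<rightarrow> Rplus"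
    using assms by (auto simp: space_pair_measure)
qed

lemma full_support_distr_scaled_sum:
  fixes \<psi> \<phi> :: "real measure" and c :: real
  assumes "sigma_finite_measure \<psi>" "sigma_finite_measure \<phi>"
    and sets_\<psi>: "sets \<psi> = sets borel_Rplus" and sets_\<phi>: "sets \<phi> = sets borel_Rplus"
    and supp_\<psi>: "full_support \<psi> Rplus" and supp_\<phi>: "full_support \<phi> Rplus"
    and "c \<ge> 0"
  shows "full_support (distr (\<psi> \<Otimes>\<^sub>M \<phi>) borel_Rplus (\<lambda>(\<eta>, y). \<eta> * c + y)) Rplus"
  unfolding full_support_def
proof (intro allI impI)
  fix G
  assume G: "openin (top_of_set Rplus) G \<and> G \<noteq> {}"
  interpret \<psi>: sigma_finite_measure \<psi> by fact
  interpret \<phi>: sigma_finite_measure \<phi> by fact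
  interpret pair_sigma_finite \<psi> \<phi> ..
  define f where "f = (\<lambda>(\<eta>::real, y::real). \<eta> * c + y)"
  have f: "f \<in> \<psi> \<Otimes>\<^sub>M \<phi> \<rightarrow>\<^sub>M borel_Rplus"
    unfolding f_def using measurable_scaled_sum_Rplus[OF \<open>c \<ge> 0\<close>]
    by (simp add: measurable_cong_sets[OF sets_pair_measure_cong[OF sets_\<psi> sets_\<phi>] refl])
  have space: "space (\<psi> \<Otimes>\<^sub>M \<phi>) = Rplus \<times> Rplus"
    using sets_eq_imp_space_eq[OF sets_\<psi>] sets_eq_imp_space_eq[OF sets_\<phi>]
    by (simp add: space_pair_measure)
  obtain U y where "open U" "G = U \<inter> Rplus" "y \<in> G"
    using G by (auto simp: openin_open)
  then obtain d e where "d > 0" "e > 0"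
    and box: "\<And>a b. 0 \<le> a \<Longrightarrow> a < d \<Longrightarrow> dist y b < e \<Longrightarrow> a * c + b \<in> U"
    using small_scaled_shift_in_open[OF \<open>c \<ge> 0\<close> \<open>open U\<close>] by blast
  define A where "A = {0..<d}"
  define B where "B = ball y e \<inter> Rplus"
  have "openin (top_of_set Rplus) A"
    unfolding A_def openin_open by (intro exI[of _ "{..<d}"]) auto
  moreover have "0 \<in> A" using \<open>d > 0\<close> by (simp add: A_def)
  ultimately have A: "A \<in> sets \<psi>" "emeasure \<psi> A > 0"
    using supp_\<psi> sets_\<psi> openin_in_sets_restrict_borel by (auto simp: full_support_def)
  have "openin (top_of_set Rplus) B"
    unfolding B_def openin_open by (intro exI[of _ "ball y e"]) auto
  moreover have "y \<in> B" using \<open>y \<in> G\<close> \<open>G = U \<inter> Rplus\<close> \<open>e > 0\<close> by (simp add: B_def)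
  ultimately have B: "B \<in> sets \<phi>" "emeasure \<phi> B > 0"
    using supp_\<phi> sets_\<phi> openin_in_sets_restrict_borel by (auto simp: full_support_def)
  have "A \<times> B \<subseteq> f -` G \<inter> space (\<psi> \<Otimes>\<^sub>M \<phi>)"
    using box \<open>c \<ge> 0\<close> \<open>G = U \<inter> Rplus\<close> by (auto simp: A_def B_def f_def space)
  moreover have "G \<in> sets borel_Rplus"
    using G openin_in_sets_restrict_borel by blast
  ultimately have "emeasure (\<psi> \<Otimes>\<^sub>M \<phi>) (A \<times> B) \<le> emeasure (distr (\<psi> \<Otimes>\<^sub>M \<phi>) borel_Rplus f) G"
    by (simp add: emeasure_distr[OF f] emeasure_mono measurable_sets[OF f])
  moreover have "emeasure (\<psi> \<Otimes>\<^sub>M \<phi>) (A \<times> B) > 0"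
    using A B by (simp add: \<phi>.emeasure_pair_measure_Times ennreal_zero_less_mult_iff)
  ultimately show "emeasure (distr (\<psi> \<Otimes>\<^sub>M \<phi>) borel_Rplus (\<lambda>(\<eta>, y). \<eta> * c + y)) G > 0"
    by (simp add: f_def)
qed

theorem lemma5p1:
  fixes \<psi> \<phi> :: "real measure" and \<sigma> :: "real \<Rightarrow> real"
  assumes "prob_space \<psi>" and "sets \<psi> = sets borel_Rplus" and "space \<psi> = Rplus"
    and "prob_space \<phi>" and "sets \<phi> = sets borel_Rplus" and "space \<phi> = Rplus"
    and "full_support \<psi> Rplus" and "full_support \<phi> Rplus"
    and "\<sigma> \<in> borel_Rplus \<rightarrow>\<^sub>M borel_Rplus"
    and "\<And>w. w \<in> Rplus \<Longrightarrow> \<sigma> w \<le> w"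
  shows "open_set_irreducible (P_sigma \<psi> \<phi> \<sigma>) Rplus"
proof (rule open_set_irreducible_if_full_support)
  show "sets (P_sigma \<psi> \<phi> \<sigma> w) = sets borel_Rplus" for w
    by (simp add: P_sigma_def)
  show "full_support (P_sigma \<psi> \<phi> \<sigma> w) Rplus" if "w \<in> Rplus" for w
    unfolding P_sigma_def
    using assms(1,2,4,5,7,8) assms(10)[OF that]
    by (intro full_support_distr_scaled_sum) (auto intro: prob_space_imp_sigma_finite)
qed

end
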